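(* Let $B$ be an $n\times N$ complex matrix with columns $x_1,\dots,x_N\in\mathbb{C}^n$ and rows $w_1,\dots,w_n\in\mathbb{C}^N$. Then $\binom{n+1}{2}\sum_{i,j}|\langle x_i|x_j\rangle|^{4} = \big(\sum_i\langle x_i|x_i\rangle^2\big)^2$ if and only if the vectors of the family $$\{w_i^{(2)} : 1\le i\le n\}\cup\{\sqrt2\, w_i\circ w_j : 1\le i<j\le n\}$$ all have the same length and are pairwise orthogonal.
   Context: For vectors of equal size, the Schur product $a\circ b$ is the entrywise product and $a^{(2)}=a\circ a$. $\langle x|y\rangle=\sum_t\overline{x_t}y_t$. *)

theory Defs
  imports Complex_Main "Jordan_Normal_Form.Matrix"
begin

definition cinner :: "complex vec \<Rightarrow> complex vec \<Rightarrow> complex" where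
  "cinner x y = (\<Sum>t<dim_vec x. cnj (x $ t) * y $ t)"

definition schur :: "complex vec \<Rightarrow> complex vec \<Rightarrow> complex vec" where
  "schur a b = vec (dim_vec a) (\<lambda>t. a $ t * b $ t)"

definition vlen :: "complex vec \<Rightarrow> real" where
  "vlen v = sqrt (\<Sum>t<dim_vec v. (cmod (v $ t))\<^sup>2)"

text \<open>The family indexed by pairs (i,j) with i \<le> j < n: w_i^(2) for i = j and
  sqrt 2 (w_i o w_j) for i < j, where w_i = row B i.\<close>
definition fam :: "complex mat \<Rightarrow> nat \<times> nat \<Rightarrow> complex vec" where
  "fam B p = (if fst p = snd p then schur (row B (fst p)) (row B (fst p))
              else complex_of_real (sqrt 2) \<cdot>\<^sub>v schur (row B (fst p)) (row B (snd p)))"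

definition fam_index :: "nat \<Rightarrow> (nat \<times> nat) set" where
  "fam_index n = {(i, j). i \<le> j \<and> j < n}"

end

theory Submission imports Defs begin

(* Let f_p (p = (i,j), i <= j < n) be the vectors of the family and
   let y_1,...,y_N be the columns of the matrix whose rows are the f_p.  Expanding
   the square of <x_i|x_j> and pairing the symmetric terms k,l gives the lifting
   identity  <x_i|x_j>^2 = <y_i|y_j>.  Hence
     sum_{i,j} |<x_i|x_j>|^4 = sum_{i,j} |<y_i|y_j>|^2 = sum_{p,q} |<f_p|f_q>|^2
   (the Frobenius norm of a Gram matrix is the same for rows and columns), and
     sum_i <x_i|x_i>^2 = sum_i |y_i|^2 = sum_p |f_p|^2.
   With d = card (fam_index n) = (n+1 choose 2), the statement thus becomes the
   equality case of  d * sum_{p,q} |<f_p|f_q>|^2 >= d * sum_p |f_p|^4 >= (sum_p |f_p|^2)^2,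
   where the first step drops the off-diagonal terms and the second one is
   Cauchy-Schwarz; equality holds iff the f_p are pairwise orthogonal and of equal length. *)

lemma finite_fam_index: "finite (fam_index n)"
proof -
  have "fam_index n \<subseteq> {..<n} \<times> {..<n}" unfolding fam_index_def by auto
  then show ?thesis by (rule finite_subset) auto
qed

lemma sum_fam_index_Suc:
  "sum g (fam_index (Suc n)) = sum g (fam_index n) + (\<Sum>k\<le>n. g (k, n))"
proof -
  have split: "fam_index (Suc n) = fam_index n \<union> (\<lambda>k. (k, n)) ` {..n}"
    and disj: "fam_index n \<inter> (\<lambda>k. (k, n)) ` {..n} = {}"
    unfolding fam_index_def by auto
  have "sum g (fam_index (Suc n)) = sum g (fam_index n) + sum g ((\<lambda>k. (k, n)) ` {..n})"
    unfolding split by (rule sum.union_disjoint) (auto simp: finite_fam_index disj)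
  also have "sum g ((\<lambda>k. (k, n)) ` {..n}) = (\<Sum>k\<le>n. g (k, n))"
    by (subst sum.reindex) (auto simp: inj_on_def)
  finally show ?thesis .
qed

lemma card_fam_index: "card (fam_index n) = (n + 1) choose 2"
proof (induction n)
  case 0
  then show ?case unfolding fam_index_def by simp
next
  case (Suc n)
  have "card (fam_index (Suc n)) = card (fam_index n) + (n + 1)"
    using sum_fam_index_Suc[of "\<lambda>_. 1::nat" n] by simp
  moreover have "(Suc n + 1) choose 2 = ((n + 1) choose 2) + (n + 1)"
    using binomial_Suc_Suc[of "Suc n" 1] by (simp add: numeral_2_eq_2)
  ultimately show ?case using Suc by simp
qed

lemma sum_square_symmetric:
  fixes h :: "nat \<Rightarrow> nat \<Rightarrow> 'a::comm_semiring_1"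
  assumes sym: "\<And>k l. h k l = h l k"
  shows "(\<Sum>k<n. \<Sum>l<n. h k l) =
         (\<Sum>p\<in>fam_index n. (if fst p = snd p then 1 else 2) * h (fst p) (snd p))"
proof (induction n)
  case 0
  then show ?case unfolding fam_index_def by simp
next
  case (Suc n)
  have new_row: "(\<Sum>k\<le>n. (if k = n then 1 else 2) * h k n) =
                 (\<Sum>k<n. h k n) + (\<Sum>l<n. h n l) + h n n"
  proof -
    have "(\<Sum>k\<le>n. (if k = n then 1 else 2) * h k n) = (\<Sum>k<n. 2 * h k n) + h n n"
      by (simp add: lessThan_Suc_atMost[symmetric])
    also have "(\<Sum>k<n. 2 * h k n) = (\<Sum>k<n. h k n) + (\<Sum>l<n. h n l)"
      by (simp add: mult_2 sum.distrib sym)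
    finally show ?thesis .
  qed
  have "(\<Sum>k<Suc n. \<Sum>l<Suc n. h k l) =
        (\<Sum>k<n. \<Sum>l<n. h k l) + ((\<Sum>k<n. h k n) + (\<Sum>l<n. h n l) + h n n)"
    by (simp add: sum.distrib algebra_simps)
  then show ?case
    unfolding sum_fam_index_Suc fst_conv snd_conv new_row Suc .
qed

text \<open>Lagrange's identity in the form
  \<open>\<Sum>\<^sub>p\<^sub>,\<^sub>q (a p - a q)\<^sup>2 = 2 (d \<Sum> a\<^sup>2 - (\<Sum> a)\<^sup>2)\<close>: it shows
  \<open>(\<Sum> a)\<^sup>2 \<le> d \<Sum> a\<^sup>2\<close> with equality iff \<open>a\<close> is constant.\<close>
lemma sum_pairwise_diff_squares:
  fixes a :: "'a \<Rightarrow> real"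
  shows "(\<Sum>p\<in>I. \<Sum>q\<in>I. (a p - a q)\<^sup>2) =
         2 * (real (card I) * (\<Sum>p\<in>I. (a p)\<^sup>2) - (\<Sum>p\<in>I. a p)\<^sup>2)"
  by (simp add: power2_diff sum.distrib sum_subtractf sum_distrib_left sum_distrib_right
      power2_eq_square algebra_simps)

lemma card_sum_squares_eq_iff:
  fixes a :: "'a \<Rightarrow> real"
  assumes "finite I"
  shows "(\<Sum>p\<in>I. a p)\<^sup>2 \<le> real (card I) * (\<Sum>p\<in>I. (a p)\<^sup>2)"
    and "real (card I) * (\<Sum>p\<in>I. (a p)\<^sup>2) = (\<Sum>p\<in>I. a p)\<^sup>2 \<longleftrightarrow>
         (\<forall>p\<in>I. \<forall>q\<in>I. a p = a q)"
proof -
  have nonneg: "0 \<le> (\<Sum>p\<in>I. \<Sum>q\<in>I. (a p - a q)\<^sup>2)"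
    by (intro sum_nonneg) simp
  then show "(\<Sum>p\<in>I. a p)\<^sup>2 \<le> real (card I) * (\<Sum>p\<in>I. (a p)\<^sup>2)"
    unfolding sum_pairwise_diff_squares by simp
  have "(\<Sum>p\<in>I. \<Sum>q\<in>I. (a p - a q)\<^sup>2) = 0 \<longleftrightarrow> (\<forall>p\<in>I. \<forall>q\<in>I. a p = a q)"
    using assms by (simp add: sum_nonneg_eq_0_iff sum_nonneg)
  then show "real (card I) * (\<Sum>p\<in>I. (a p)\<^sup>2) = (\<Sum>p\<in>I. a p)\<^sup>2 \<longleftrightarrow>
             (\<forall>p\<in>I. \<forall>q\<in>I. a p = a q)"
    unfolding sum_pairwise_diff_squares by simp
qed

text \<open>For a nonnegative matrix \<open>M\<close> with diagonal \<open>a\<^sup>2\<close> (think \<open>M p q = |\<langle>f\<^sub>p|f\<^sub>q\<rangle>|\<^sup>2\<close>,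
  \<open>a p = |f\<^sub>p|\<^sup>2\<close>) we have \<open>d \<Sum> M \<ge> (\<Sum> a)\<^sup>2\<close>, with equality exactly when \<open>a\<close> is
  constant and \<open>M\<close> is diagonal.\<close>
lemma card_sum_matrix_eq_iff:
  fixes a :: "'a \<Rightarrow> real" and M :: "'a \<Rightarrow> 'a \<Rightarrow> real"
  assumes fin: "finite I" and M_nonneg: "\<And>p q. M p q \<ge> 0" and M_diag: "\<And>p. M p p = (a p)\<^sup>2"
  shows "real (card I) * (\<Sum>p\<in>I. \<Sum>q\<in>I. M p q) = (\<Sum>p\<in>I. a p)\<^sup>2 \<longleftrightarrow>
         (\<forall>p\<in>I. \<forall>q\<in>I. a p = a q) \<and> (\<forall>p\<in>I. \<forall>q\<in>I. p \<noteq> q \<longrightarrow> M p q = 0)"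
proof (cases "I = {}")
  case True
  then show ?thesis by simp
next
  case False
  define off where "off = (\<Sum>p\<in>I. \<Sum>q\<in>I-{p}. M p q)"
  have off_nonneg: "off \<ge> 0"
    unfolding off_def by (intro sum_nonneg) (simp add: M_nonneg)
  have "(\<Sum>q\<in>I. M p q) = (a p)\<^sup>2 + (\<Sum>q\<in>I-{p}. M p q)" if "p \<in> I" for p
    using that fin by (simp add: sum.remove M_diag)
  then have total: "(\<Sum>p\<in>I. \<Sum>q\<in>I. M p q) = (\<Sum>p\<in>I. (a p)\<^sup>2) + off"
    unfolding off_def by (simp add: sum.distrib)
  have off_zero: "off = 0 \<longleftrightarrow> (\<forall>p\<in>I. \<forall>q\<in>I. p \<noteq> q \<longrightarrow> M p q = 0)"
    using fin unfolding off_def by (auto simp: sum_nonneg_eq_0_iff sum_nonneg M_nonneg)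
  have d_pos: "real (card I) > 0"
    using False fin by (simp add: card_gt_0_iff)
  note cs = card_sum_squares_eq_iff[OF fin, of a]
  have "real (card I) * (\<Sum>p\<in>I. \<Sum>q\<in>I. M p q) = (\<Sum>p\<in>I. a p)\<^sup>2 \<longleftrightarrow>
        real (card I) * (\<Sum>p\<in>I. (a p)\<^sup>2) = (\<Sum>p\<in>I. a p)\<^sup>2 \<and> off = 0"
    unfolding total using cs(1) off_nonneg d_pos
    by (smt (verit, best) distrib_left mult_pos_pos)
  then show ?thesis
    unfolding cs(2) off_zero .
qed

lemma cinner_self_vlen: "cinner v v = complex_of_real ((vlen v)\<^sup>2)"
proof -
  have sq: "(vlen v)\<^sup>2 = (\<Sum>t<dim_vec v. (cmod (v $ t))\<^sup>2)"
    unfolding vlen_def by (simp add: sum_nonneg)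
  show ?thesis
    unfolding sq cinner_def of_real_sum complex_norm_square by (simp add: mult.commute)
qed

text \<open>The Frobenius norm of a Gram matrix does not depend on whether one takes the
  Gram matrix of the rows or of the columns: \<open>tr ((C\<^sup>*C)\<^sup>2) = tr ((CC\<^sup>*)\<^sup>2)\<close>.\<close>
lemma gram_frobenius_swap:
  fixes F :: "'p \<Rightarrow> nat \<Rightarrow> complex"
  shows "(\<Sum>i<N. \<Sum>j<N. (cmod (\<Sum>p\<in>I. cnj (F p i) * F p j))\<^sup>2)
       = (\<Sum>p\<in>I. \<Sum>q\<in>I. (cmod (\<Sum>i<N. cnj (F p i) * F q i))\<^sup>2)"
proof -
  define X where "X i j p q = cnj (F p i) * F p j * (F q i * cnj (F q j))" for i j p q
  have "complex_of_real (\<Sum>i<N. \<Sum>j<N. (cmod (\<Sum>p\<in>I. cnj (F p i) * F p j))\<^sup>2)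
      = (\<Sum>i<N. \<Sum>j<N. \<Sum>p\<in>I. \<Sum>q\<in>I. X i j p q)"
    unfolding of_real_sum complex_norm_square by (simp add: sum_product X_def)
  also have "\<dots> = (\<Sum>i<N. \<Sum>p\<in>I. \<Sum>q\<in>I. \<Sum>j<N. X i j p q)"
    by (intro sum.cong refl, subst sum.swap, intro sum.cong refl, rule sum.swap)
  also have "\<dots> = (\<Sum>p\<in>I. \<Sum>q\<in>I. \<Sum>i<N. \<Sum>j<N. X i j p q)"
    by (subst sum.swap, intro sum.cong refl, rule sum.swap)
  also have "\<dots> = complex_of_real (\<Sum>p\<in>I. \<Sum>q\<in>I. (cmod (\<Sum>i<N. cnj (F p i) * F q i))\<^sup>2)"
    unfolding of_real_sum complex_norm_square cnj_sum complex_cnj_mult complex_cnj_cnj sum_product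
    by (simp add: X_def mult_ac)
  finally show ?thesis by (simp only: of_real_eq_iff)
qed

lemma dim_fam: "dim_vec (fam B p) = dim_col B"
  by (simp add: fam_def schur_def)

lemma fam_nth:
  assumes "B \<in> carrier_mat n N" "p \<in> fam_index n" "t < N"
  shows "fam B p $ t = (if fst p = snd p then 1 else complex_of_real (sqrt 2)) *
                       (B $$ (fst p, t) * B $$ (snd p, t))"
  using assms unfolding fam_index_def by (auto simp: fam_def schur_def)

text \<open>The lifting identity: the columns of the matrix with rows \<open>f\<^sub>p\<close> have Gram
  matrix the entrywise square of the Gram matrix of the columns of \<open>B\<close>.\<close>
lemma cinner_col_square:
  assumes B: "B \<in> carrier_mat n N" and ij: "i < N" "j < N"
  shows "(cinner (col B i) (col B j))\<^sup>2 = (\<Sum>p\<in>fam_index n. cnj (fam B p $ i) * fam B p $ j)"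
proof -
  define h where "h k l = (cnj (B $$ (k, i)) * B $$ (k, j)) * (cnj (B $$ (l, i)) * B $$ (l, j))"
    for k l
  have "(cinner (col B i) (col B j))\<^sup>2 = (\<Sum>k<n. \<Sum>l<n. h k l)"
    using B ij by (simp add: cinner_def power2_eq_square sum_product h_def)
  also have "\<dots> = (\<Sum>p\<in>fam_index n. (if fst p = snd p then 1 else 2) * h (fst p) (snd p))"
    by (rule sum_square_symmetric) (simp add: h_def mult_ac)
  also have "\<dots> = (\<Sum>p\<in>fam_index n. cnj (fam B p $ i) * fam B p $ j)"
  proof (intro sum.cong refl)
    fix p assume p: "p \<in> fam_index n"
    have "complex_of_real (sqrt 2) * complex_of_real (sqrt 2) = 2"
      by (simp flip: of_real_mult)
    then show "(if fst p = snd p then 1 else 2) * h (fst p) (snd p) = cnj (fam B p $ i) * fam B p $ j"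
      unfolding fam_nth[OF B p ij(1)] fam_nth[OF B p ij(2)] h_def by (simp add: mult_ac)
  qed
  finally show ?thesis .
qed

lemma frame_potential_fam:
  assumes B: "B \<in> carrier_mat n N"
  shows "(\<Sum>i<N. \<Sum>j<N. (cmod (cinner (col B i) (col B j))) ^ 4) =
         (\<Sum>p\<in>fam_index n. \<Sum>q\<in>fam_index n. (cmod (cinner (fam B p) (fam B q)))\<^sup>2)"
proof -
  have "(cmod (cinner (col B i) (col B j))) ^ 4 =
        (cmod (\<Sum>p\<in>fam_index n. cnj (fam B p $ i) * fam B p $ j))\<^sup>2"
    if "i < N" "j < N" for i j
  proof -
    have "(cmod (cinner (col B i) (col B j))) ^ 4 = (cmod ((cinner (col B i) (col B j))\<^sup>2))\<^sup>2"
      by (simp add: norm_power flip: power_mult)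
    then show ?thesis
      unfolding cinner_col_square[OF B that] .
  qed
  then show ?thesis
    using B by (simp add: gram_frobenius_swap cinner_def dim_fam)
qed

lemma sum_col_norms_fam:
  assumes B: "B \<in> carrier_mat n N"
  shows "(\<Sum>i<N. (cinner (col B i) (col B i))\<^sup>2) =
         complex_of_real (\<Sum>p\<in>fam_index n. (vlen (fam B p))\<^sup>2)"
proof -
  have "(\<Sum>i<N. (cinner (col B i) (col B i))\<^sup>2) =
        (\<Sum>i<N. \<Sum>p\<in>fam_index n. cnj (fam B p $ i) * fam B p $ i)"
    by (simp add: cinner_col_square[OF B])
  also have "\<dots> = (\<Sum>p\<in>fam_index n. cinner (fam B p) (fam B p))"
    using B by (simp add: sum.swap[of _ "{..<N}"] cinner_def dim_fam)
  finally show ?thesis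
    by (simp add: cinner_self_vlen of_real_sum)
qed

theorem corollary5:
  fixes B :: "complex mat" and n N :: nat
  assumes "B \<in> carrier_mat n N"
  shows "(complex_of_real (real ((n + 1) choose 2) *
            (\<Sum>i<N. \<Sum>j<N. (cmod (cinner (col B i) (col B j))) ^ 4))
          = (\<Sum>i<N. (cinner (col B i) (col B i))\<^sup>2)\<^sup>2)
     \<longleftrightarrow>
     ((\<forall>p\<in>fam_index n. \<forall>q\<in>fam_index n. vlen (fam B p) = vlen (fam B q)) \<and>
      (\<forall>p\<in>fam_index n. \<forall>q\<in>fam_index n. p \<noteq> q \<longrightarrow> cinner (fam B p) (fam B q) = 0))"
proof -
  define a where "a p = (vlen (fam B p))\<^sup>2" for p
  define M where "M p q = (cmod (cinner (fam B p) (fam B q)))\<^sup>2" for p q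
  have M_diag: "M p p = (a p)\<^sup>2" for p
    unfolding M_def a_def cinner_self_vlen by (simp add: norm_power flip: power_mult)
  have a_eq_iff: "a p = a q \<longleftrightarrow> vlen (fam B p) = vlen (fam B q)" for p q
    unfolding a_def by (simp add: vlen_def sum_nonneg)
  have "(complex_of_real (real ((n + 1) choose 2) *
            (\<Sum>i<N. \<Sum>j<N. (cmod (cinner (col B i) (col B j))) ^ 4))
          = (\<Sum>i<N. (cinner (col B i) (col B i))\<^sup>2)\<^sup>2)
     \<longleftrightarrow> real (card (fam_index n)) * (\<Sum>p\<in>fam_index n. \<Sum>q\<in>fam_index n. M p q)
         = (\<Sum>p\<in>fam_index n. a p)\<^sup>2"
    unfolding frame_potential_fam[OF assms] sum_col_norms_fam[OF assms] card_fam_index M_def a_def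
    by (simp only: of_real_power[symmetric] of_real_mult[symmetric] of_real_eq_iff)
  also have "\<dots> \<longleftrightarrow> (\<forall>p\<in>fam_index n. \<forall>q\<in>fam_index n. a p = a q) \<and>
                   (\<forall>p\<in>fam_index n. \<forall>q\<in>fam_index n. p \<noteq> q \<longrightarrow> M p q = 0)"
    by (rule card_sum_matrix_eq_iff[OF finite_fam_index _ M_diag]) (simp add: M_def)
  also have "\<dots> \<longleftrightarrow>
      (\<forall>p\<in>fam_index n. \<forall>q\<in>fam_index n. vlen (fam B p) = vlen (fam B q)) \<and>
      (\<forall>p\<in>fam_index n. \<forall>q\<in>fam_index n. p \<noteq> q \<longrightarrow> cinner (fam B p) (fam B q) = 0)"
    by (simp add: a_eq_iff M_def)
  finally show ?thesis .
qed

end
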